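(* Let $\Delta\ge 3$ be an integer and let $G\in\mathcal{G}_\Delta$. Let $c_1,\dots,c_\Delta$ be the real numbers defined by $c_\Delta=\frac{1}{\Delta}$ and $ic_i+c_{i+1}=1$ for $i=1,\dots,\Delta-1$. Then $$\alpha(G)\ge \sum_{i=1}^{\Delta} c_i|V_i(G)|.$$
   Context: All graphs are simple, finite and undirected. For an integer $\Delta\ge 3$, $\mathcal{G}_\Delta$ denotes the set of connected graphs $G\neq K_{\Delta+1}$ with maximum degree $\Delta$. For a graph $G$ and $i\ge 1$, $V_i(G)$ is the set of vertices of $G$ of degree $i$. $\alpha(G)$ is the independence number of $G$. *)

theory Defs
  imports Main "HOL-Library.Disjoint_Sets" Complex_Main
begin

definition simple_graph :: "'a set \<Rightarrow> ('a \<Rightarrow> 'a \<Rightarrow> bool) \<Rightarrow> bool" where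
  "simple_graph V E \<longleftrightarrow> finite V \<and>
     (\<forall>u v. E u v \<longrightarrow> u \<in> V \<and> v \<in> V) \<and>
     (\<forall>u v. E u v \<longrightarrow> E v u) \<and> (\<forall>v. \<not> E v v)"

definition neighbours :: "'a set \<Rightarrow> ('a \<Rightarrow> 'a \<Rightarrow> bool) \<Rightarrow> 'a \<Rightarrow> 'a set" where
  "neighbours V E v = {u \<in> V. E v u}"

definition degree :: "'a set \<Rightarrow> ('a \<Rightarrow> 'a \<Rightarrow> bool) \<Rightarrow> 'a \<Rightarrow> nat" where
  "degree V E v = card (neighbours V E v)"

definition max_degree :: "'a set \<Rightarrow> ('a \<Rightarrow> 'a \<Rightarrow> bool) \<Rightarrow> nat" where
  "max_degree V E = Max (insert 0 (degree V E ` V))"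

definition deg_class :: "'a set \<Rightarrow> ('a \<Rightarrow> 'a \<Rightarrow> bool) \<Rightarrow> nat \<Rightarrow> 'a set" where
  "deg_class V E i = {v \<in> V. degree V E v = i}"

definition connected_graph :: "'a set \<Rightarrow> ('a \<Rightarrow> 'a \<Rightarrow> bool) \<Rightarrow> bool" where
  "connected_graph V E \<longleftrightarrow> V \<noteq> {} \<and> (\<forall>u\<in>V. \<forall>v\<in>V. E\<^sup>*\<^sup>* u v)"

definition is_complete_graph :: "'a set \<Rightarrow> ('a \<Rightarrow> 'a \<Rightarrow> bool) \<Rightarrow> nat \<Rightarrow> bool" where
  "is_complete_graph V E n \<longleftrightarrow> card V = n \<and> (\<forall>u\<in>V. \<forall>v\<in>V. u \<noteq> v \<longrightarrow> E u v)"

definition independent_set :: "'a set \<Rightarrow> ('a \<Rightarrow> 'a \<Rightarrow> bool) \<Rightarrow> 'a set \<Rightarrow> bool" where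
  "independent_set V E S \<longleftrightarrow> S \<subseteq> V \<and> (\<forall>u\<in>S. \<forall>v\<in>S. \<not> E u v)"

definition independence_number :: "'a set \<Rightarrow> ('a \<Rightarrow> 'a \<Rightarrow> bool) \<Rightarrow> nat" where
  "independence_number V E = Max (card ` {S. independent_set V E S})"

definition in_G_Delta :: "nat \<Rightarrow> 'a set \<Rightarrow> ('a \<Rightarrow> 'a \<Rightarrow> bool) \<Rightarrow> bool" where
  "in_G_Delta \<Delta> V E \<longleftrightarrow> simple_graph V E \<and> connected_graph V E \<and>
     max_degree V E = \<Delta> \<and> \<not> is_complete_graph V E (\<Delta> + 1)"

end

theory Submission
  imports Defs
begin

(*
  Call a vertex of a graph S complete if its component is a complete graph, and give it the
  weight 1 / (d(v) + 1) if it is complete and c_{d(v)} otherwise. For a graph in G_Delta no vertex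
  is complete, so its total weight is the right-hand side, and it suffices to show that every
  graph of maximum degree at most Delta has total weight at most alpha. This goes by induction on
  the vertex set; the c_i decrease, with 1 / (i + 1) <= c_i <= 1 / i.

  A disconnected graph splits, and a complete graph has weight 1. If some edge joins vertices of
  different degrees, let v have the least degree d among the lower ends of such edges. Its closed
  neighbourhood has weight at most c_(d + 1) + d c_d = 1 and taking v raises alpha by one; deleting
  the closed neighbourhood only raises the other weights, since a complete component K of what
  remains contains a vertex that lost a neighbour, which bounds the old weight of K by 1 as well.
  A d-regular graph with d < Delta loses one vertex v instead: its d neighbours get weight
  c_(d - 1), and (d + 1) c_d <= d c_(d - 1). In a Delta-regular graph every weight is 1 / Delta
  and the claim becomes |S| <= Delta alpha, a consequence of Brooks' theorem. Across a cut vertex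
  it follows from the bounds for the pieces; otherwise, as in Lovasz's proof, some vertex x has
  non-adjacent neighbours u, w with S - {u, w} connected, and giving u and w the same colour and
  colouring the rest greedily towards x uses only Delta colours.
*)

section \<open>The coefficients\<close>

locale weight_sequence =
  fixes D :: nat and c :: "nat \<Rightarrow> real"
  assumes c_D: "c D = 1 / real D"
    and c_rec: "1 \<le> i \<Longrightarrow> i < D \<Longrightarrow> real i * c i + c (Suc i) = 1"
begin

lemma c_bounds:
  assumes "1 \<le> i" "i \<le> D"
  shows "1 / real (Suc i) \<le> c i \<and> c i \<le> 1 / real i"
  using assms(2,1)
proof (induction rule: inc_induct)
  case base
  then show ?case using c_D by (simp add: frac_le)
next
  case (step n)
  then have IH: "1 / real (Suc (Suc n)) \<le> c (Suc n)" "c (Suc n) \<le> 1 / real (Suc n)"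
    by auto
  have n: "0 < real n" using step by simp
  have cn: "c n = (1 - c (Suc n)) / real n"
    using c_rec[of n] step n by (simp add: field_simps)
  have "1 - 1 / real (Suc n) = real n / real (Suc n)"
    by (simp add: field_simps)
  then have "1 / real (Suc n) = (1 - 1 / real (Suc n)) / real n"
    using n by simp
  also have "\<dots> \<le> c n"
    unfolding cn using IH(2) n by (simp add: divide_right_mono)
  moreover have "0 \<le> c (Suc n)"
    using IH(1) by (smt (verit) divide_nonneg_nonneg of_nat_0_le_iff)
  ultimately show ?case
    unfolding cn using n by (simp add: divide_right_mono)
qed

lemma c_antimono:
  assumes "1 \<le> i" "i \<le> j" "j \<le> D"
  shows "c j \<le> c i"
  using assms(2,3)
proof (induction rule: dec_induct)
  case (step n)
  have "c (Suc n) \<le> 1 / real (Suc n)" using c_bounds[of "Suc n"] step by simp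
  also have "\<dots> \<le> c n" using c_bounds[of n] step assms(1) by simp
  finally show ?case using step by simp
qed simp

lemma c_pos: "1 \<le> i \<Longrightarrow> i \<le> D \<Longrightarrow> 0 < c i"
  using c_bounds[of i] by (smt (verit) divide_pos_pos of_nat_0_less_iff zero_less_Suc)

lemma c_Suc_plus_le_one:
  assumes "j < D"
  shows "c (Suc j) + real j * c j \<le> 1"
proof (cases "j = 0")
  case True
  then show ?thesis using c_bounds[of 1] assms by simp
next
  case False
  then show ?thesis using c_rec[of j] assms by simp
qed

lemma sum_c_le_one:
  assumes "finite K" "card K = Suc j" "z \<in> K" "j < f z"
    and "\<forall>t\<in>K. j \<le> f t \<and> f t \<le> D"
  shows "(\<Sum>t\<in>K. c (f t)) \<le> 1"
proof -
  have "(\<Sum>t\<in>K. c (f t)) = c (f z) + (\<Sum>t\<in>K - {z}. c (f t))"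
    using assms(1,3) by (simp add: sum.remove)
  also have "c (f z) \<le> c (Suc j)"
    using c_antimono[of "Suc j" "f z"] assms by simp
  also have "(\<Sum>t\<in>K - {z}. c (f t)) \<le> (\<Sum>t\<in>K - {z}. c j)"
  proof (rule sum_mono)
    fix t assume t: "t \<in> K - {z}"
    have "j \<noteq> 0"
    proof
      assume "j = 0"
      then have "K = {z}" using assms(2,3) by (metis One_nat_def card_1_singletonE singletonD)
      then show False using t by simp
    qed
    then show "c (f t) \<le> c j" using c_antimono[of j "f t"] assms t by simp
  qed
  also have "(\<Sum>t\<in>K - {z}. c j) = real j * c j" using assms(1-3) by simp
  also have "c (Suc j) + real j * c j \<le> 1"
    using c_Suc_plus_le_one assms(3-5) by (meson less_le_trans)
  finally show ?thesis by simp
qed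

lemma Suc_mult_c_le_mult_c_pred:
  assumes "2 \<le> d" "d < D"
  shows "real (Suc d) * c d \<le> real d * c (d - 1)"
proof -
  txt \<open>With \<open>c (Suc d) \<ge> 1 / (d + 2)\<close> the recurrence gives \<open>c d \<le> (d + 1) / (d (d + 2))\<close>;
    after the recurrence for \<open>d - 1\<close>, the claim reads \<open>c d (d\<^sup>2 + d - 1) \<le> d\<close>.\<close>
  define n a where "n = real d" and "a = c d"
  have n: "2 \<le> n" using assms(1) unfolding n_def by simp
  have a: "0 \<le> a" using c_pos[of d] assms unfolding a_def by simp
  have "a * n * (n + 2) = (1 - c (Suc d)) * (n + 2)"
    using c_rec[of d] assms unfolding n_def a_def by (simp add: mult.commute eq_diff_eq)
  moreover have "1 \<le> c (Suc d) * (n + 2)"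
    using c_bounds[of "Suc d"] assms unfolding n_def by (simp add: field_simps)
  ultimately have "a * n * (n + 2) \<le> n + 1" by (simp add: algebra_simps)
  then have "n * (a * n * (n + 2)) \<le> n * (n + 1)" using n by (simp add: mult_left_mono)
  moreover have "a * (n * n + n - 1) * (n + 1) = n * (a * n * (n + 2)) - a"
    by (simp add: algebra_simps)
  ultimately have "a * (n * n + n - 1) * (n + 1) \<le> n * (n + 1)" using a by simp
  then have le: "a * (n * n + n - 1) \<le> n" using n by (simp add: mult_le_cancel_right)
  have "(n - 1) * ((n + 1) * a) = a * (n * n + n - 1) - n * a" by (simp add: algebra_simps)
  also have "\<dots> \<le> n * (1 - a)" using le by (simp add: algebra_simps)
  also have "\<dots> = (n - 1) * (n * c (d - 1))"
    using c_rec[of "d - 1"] assms unfolding n_def a_def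
    by (simp add: algebra_simps of_nat_diff flip: eq_diff_eq)
  finally have "(n + 1) * a \<le> n * c (d - 1)" using n by simp
  then show ?thesis unfolding n_def a_def by (simp add: add.commute)
qed

end

section \<open>Independent sets and connectivity\<close>

locale sgraph =
  fixes E :: "'a \<Rightarrow> 'a \<Rightarrow> bool"
  assumes E_sym: "E u v \<Longrightarrow> E v u" and E_irrefl: "\<not> E v v"
begin

abbreviation nbr :: "'a set \<Rightarrow> 'a \<Rightarrow> 'a set" where "nbr S v \<equiv> neighbours S E v"
abbreviation deg :: "'a set \<Rightarrow> 'a \<Rightarrow> nat" where "deg S v \<equiv> degree S E v"
abbreviation \<alpha> :: "'a set \<Rightarrow> nat" where "\<alpha> S \<equiv> independence_number S E"

definition closed_nbr :: "'a set \<Rightarrow> 'a \<Rightarrow> 'a set" where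
  "closed_nbr S v = insert v (nbr S v)"

lemma in_nbr_iff [simp]: "u \<in> nbr S v \<longleftrightarrow> u \<in> S \<and> E v u"
  by (simp add: neighbours_def)

lemma nbr_subset: "nbr S v \<subseteq> S"
  by auto

lemma finite_nbr: "finite S \<Longrightarrow> finite (nbr S v)"
  using finite_subset[OF nbr_subset] .

lemma nbr_mono: "T \<subseteq> S \<Longrightarrow> nbr T v \<subseteq> nbr S v"
  by auto

lemma nbr_Diff: "nbr (S - X) v = nbr S v - X"
  by auto

lemma not_in_nbr: "v \<notin> nbr S v"
  using E_irrefl by simp

lemma deg_mono: "finite S \<Longrightarrow> T \<subseteq> S \<Longrightarrow> deg T v \<le> deg S v"
  unfolding degree_def by (intro card_mono finite_nbr nbr_mono)

lemma deg_Diff: "finite S \<Longrightarrow> deg (S - X) v = deg S v - card (nbr S v \<inter> X)"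
  unfolding degree_def nbr_Diff by (simp add: card_Diff_subset_Int finite_nbr)

lemma deg_Diff_singleton:
  assumes "finite S" "v \<in> S"
  shows "deg (S - {v}) t = (if E t v then deg S t - 1 else deg S t)"
proof -
  have "nbr S t \<inter> {v} = (if E t v then {v} else {})" using assms(2) by auto
  then show ?thesis using deg_Diff[OF assms(1), of "{v}" t] by simp
qed

lemma deg_pos_if_nbr: "finite S \<Longrightarrow> u \<in> nbr S v \<Longrightarrow> 0 < deg S v"
  unfolding degree_def using finite_nbr card_gt_0_iff by blast

lemma nbr_eq_if_deg_eq:
  assumes "finite S" "T \<subseteq> S" "deg T v = deg S v"
  shows "nbr T v = nbr S v"
  using card_subset_eq[OF finite_nbr[OF assms(1)] nbr_mono[OF assms(2)]] assms(3)
  by (simp add: degree_def)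

lemma closed_nbr_subset: "v \<in> S \<Longrightarrow> closed_nbr S v \<subseteq> S"
  by (auto simp: closed_nbr_def)

lemma card_closed_nbr: "finite S \<Longrightarrow> card (closed_nbr S v) = Suc (deg S v)"
  unfolding closed_nbr_def degree_def using finite_nbr not_in_nbr by (rule card_insert_disjoint)

lemma finite_independent_sets: "finite S \<Longrightarrow> finite {I. independent_set S E I}"
  by (rule finite_subset[of _ "Pow S"]) (auto simp: independent_set_def)

lemma card_le_alpha: "finite S \<Longrightarrow> independent_set S E I \<Longrightarrow> card I \<le> \<alpha> S"
  unfolding independence_number_def by (rule Max_ge) (auto simp: finite_independent_sets)

lemma maximum_independent_set:
  assumes "finite S"
  obtains I where "independent_set S E I" "card I = \<alpha> S"
proof -
  have "{} \<in> {I. independent_set S E I}" by (simp add: independent_set_def)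
  then have "\<alpha> S \<in> card ` {I. independent_set S E I}"
    unfolding independence_number_def using assms finite_independent_sets by (intro Max_in) auto
  then show ?thesis using that by auto
qed

lemma alpha_mono:
  assumes "finite S" "T \<subseteq> S"
  shows "\<alpha> T \<le> \<alpha> S"
proof -
  obtain I where I: "independent_set T E I" "card I = \<alpha> T"
    using maximum_independent_set finite_subset assms by metis
  then have "independent_set S E I" using assms(2) by (auto simp: independent_set_def)
  then show ?thesis using card_le_alpha assms(1) I(2) by metis
qed

lemma alpha_pos: "finite S \<Longrightarrow> S \<noteq> {} \<Longrightarrow> 1 \<le> \<alpha> S"
proof -
  assume "finite S" "S \<noteq> {}"
  moreover obtain v where "v \<in> S" using \<open>S \<noteq> {}\<close> by blast
  then have "independent_set S E {v}" using E_irrefl by (simp add: independent_set_def)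
  ultimately show ?thesis using card_le_alpha by fastforce
qed

lemma alpha_Un:
  assumes "finite S" "finite T" "S \<inter> T = {}" "\<forall>a\<in>S. \<forall>b\<in>T. \<not> E a b"
  shows "\<alpha> S + \<alpha> T \<le> \<alpha> (S \<union> T)"
proof -
  obtain I J where I: "independent_set S E I" "card I = \<alpha> S"
    and J: "independent_set T E J" "card J = \<alpha> T"
    using maximum_independent_set assms(1,2) by metis
  have "independent_set (S \<union> T) E (I \<union> J)"
    using I J assms(4) E_sym unfolding independent_set_def by blast
  moreover have "card (I \<union> J) = card I + card J"
    using I J assms
    by (intro card_Un_disjoint) (auto simp: independent_set_def intro: finite_subset)
  ultimately show ?thesis using card_le_alpha[of "S \<union> T" "I \<union> J"] assms I J by simp
qed

lemma alpha_Diff_closed_nbr: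
  assumes "finite S" "v \<in> S"
  shows "Suc (\<alpha> (S - closed_nbr S v)) \<le> \<alpha> S"
proof -
  obtain I where I: "independent_set (S - closed_nbr S v) E I" "card I = \<alpha> (S - closed_nbr S v)"
    using maximum_independent_set assms(1) by blast
  have "independent_set S E (insert v I)"
    using I assms E_sym E_irrefl unfolding independent_set_def closed_nbr_def by auto
  moreover have "card (insert v I) = Suc (card I)"
    using I assms by (intro card_insert_disjoint)
      (auto simp: independent_set_def closed_nbr_def intro: finite_subset)
  ultimately show ?thesis using card_le_alpha assms(1) I(2) by fastforce
qed

lemma alpha_insert:
  assumes "finite A"
  shows "\<alpha> (insert x A) \<le> max (\<alpha> A) (Suc (\<alpha> (A - nbr A x)))"
proof -
  obtain I where I: "independent_set (insert x A) E I" "card I = \<alpha> (insert x A)"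
    using maximum_independent_set[of "insert x A"] assms by auto
  show ?thesis
  proof (cases "x \<in> I")
    case False
    then have "independent_set A E I" using I by (auto simp: independent_set_def)
    then have "card I \<le> \<alpha> A" using card_le_alpha assms by blast
    then show ?thesis using I(2) by simp
  next
    case True
    then have "independent_set (A - nbr A x) E (I - {x})"
      using I unfolding independent_set_def by auto
    then have "card (I - {x}) \<le> \<alpha> (A - nbr A x)" using card_le_alpha assms by blast
    moreover have "finite I"
      using I(1) assms unfolding independent_set_def by (meson finite_insert finite_subset)
    then have "card I = Suc (card (I - {x}))" using True by (rule card.remove)
    ultimately show ?thesis using I(2) by simp
  qed
qed

definition reach_in :: "'a set \<Rightarrow> 'a \<Rightarrow> 'a \<Rightarrow> bool" where
  "reach_in S = (\<lambda>a b. a \<in> S \<and> b \<in> S \<and> E a b)\<^sup>*\<^sup>*"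

definition connected_in :: "'a set \<Rightarrow> bool" where
  "connected_in S \<longleftrightarrow> (\<forall>a\<in>S. \<forall>b\<in>S. reach_in S a b)"

definition component :: "'a set \<Rightarrow> 'a \<Rightarrow> 'a set" where
  "component S z = {t. reach_in S z t}"

definition splits :: "'a set \<Rightarrow> 'a set \<Rightarrow> bool" where
  "splits X A \<longleftrightarrow> A \<subseteq> X \<and> A \<noteq> {} \<and> X - A \<noteq> {} \<and> (\<forall>s\<in>A. \<forall>t\<in>X - A. \<not> E s t)"

lemma reach_in_refl: "reach_in S a a"
  by (simp add: reach_in_def)

lemma reach_in_step: "reach_in S a b \<Longrightarrow> b \<in> S \<Longrightarrow> d \<in> S \<Longrightarrow> E b d \<Longrightarrow> reach_in S a d"
  unfolding reach_in_def by (rule rtranclp.rtrancl_into_rtrancl) auto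

lemma reach_in_edge: "b \<in> S \<Longrightarrow> d \<in> S \<Longrightarrow> E b d \<Longrightarrow> reach_in S b d"
  using reach_in_step[OF reach_in_refl] .

lemma reach_in_trans: "reach_in S a b \<Longrightarrow> reach_in S b d \<Longrightarrow> reach_in S a d"
  unfolding reach_in_def by (rule rtranclp_trans)

lemma reach_in_sym: "reach_in S a b \<Longrightarrow> reach_in S b a"
  unfolding reach_in_def by (rule symp_rtranclp[THEN sympD]) (auto intro: sympI E_sym)

lemma reach_in_mono: "S \<subseteq> T \<Longrightarrow> reach_in S a b \<Longrightarrow> reach_in T a b"
  unfolding reach_in_def by (rule rtranclp_mono[THEN predicate2D]) auto

lemma reach_in_induct [consumes 1, case_names base step]:
  assumes "reach_in S a b" "P a"
    and "\<And>y z. reach_in S a y \<Longrightarrow> y \<in> S \<Longrightarrow> z \<in> S \<Longrightarrow> E y z \<Longrightarrow> P y \<Longrightarrow> P z"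
  shows "P b"
  using assms(1) unfolding reach_in_def
proof (induction rule: rtranclp_induct)
  case (step y z)
  then show ?case using assms(3)[of y z] unfolding reach_in_def by blast
qed (rule assms(2))

lemma reach_in_closed:
  "reach_in S a b \<Longrightarrow> a \<in> T \<Longrightarrow> \<forall>s\<in>T. \<forall>t\<in>S - T. \<not> E s t \<Longrightarrow> b \<in> T"
  by (induction rule: reach_in_induct) auto

lemma reach_in_in: "reach_in S a b \<Longrightarrow> a \<in> S \<Longrightarrow> b \<in> S"
  using reach_in_closed by blast

lemma connected_in_closed_subset_eq:
  assumes "connected_in S" "T \<subseteq> S" "T \<noteq> {}" "\<forall>s\<in>T. \<forall>t\<in>S - T. \<not> E s t"
  shows "T = S"
proof -
  obtain a where "a \<in> T" using assms(3) by blast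
  then have "b \<in> T" if "b \<in> S" for b
    using reach_in_closed assms that unfolding connected_in_def by blast
  then show ?thesis using assms(2) by blast
qed

lemma connected_in_not_splits: "connected_in S \<Longrightarrow> \<not> splits S A"
  unfolding splits_def using connected_in_closed_subset_eq by blast

lemma connected_inI: "\<forall>z\<in>X. reach_in X z y \<Longrightarrow> connected_in X"
  unfolding connected_in_def using reach_in_sym reach_in_trans by blast

lemma connected_in_const:
  assumes "connected_in S" "\<forall>a\<in>S. \<forall>b\<in>S. E a b \<longrightarrow> f a = f b" "a \<in> S" "b \<in> S"
  shows "f a = f b"
proof -
  have "reach_in S a b" using assms unfolding connected_in_def by blast
  then show ?thesis using assms(2) by (induction rule: reach_in_induct) auto
qed

lemma self_in_component: "z \<in> component S z"
  by (simp add: component_def reach_in_refl)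

lemma component_subset: "z \<in> S \<Longrightarrow> component S z \<subseteq> S"
  using reach_in_in by (auto simp: component_def)

lemma component_closed:
  assumes "s \<in> component S z" "z \<in> S" "t \<in> S" "E s t"
  shows "t \<in> component S z"
proof -
  have "reach_in S z s" using assms(1) by (simp add: component_def)
  moreover have "s \<in> S" using reach_in_in[OF calculation assms(2)] .
  ultimately show ?thesis using reach_in_step assms(3,4) by (simp add: component_def)
qed

lemma reach_in_component: "t \<in> component P z \<Longrightarrow> P \<subseteq> X \<Longrightarrow> reach_in X z t"
  unfolding component_def using reach_in_mono by blast

lemma splits_component:
  assumes "P \<subseteq> X" "z \<in> P" "\<forall>s\<in>component P z. \<forall>t\<in>X - P. \<not> E s t"
    and "X - component P z \<noteq> {}"
  shows "splits X (component P z)"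
proof -
  have "\<not> E s t" if "s \<in> component P z" "t \<in> X - component P z" for s t
  proof
    assume "E s t"
    then have "t \<notin> P" using component_closed[OF that(1) assms(2)] that(2) by blast
    then show False using assms(3) that \<open>E s t\<close> by blast
  qed
  moreover have "component P z \<subseteq> X" using component_subset[OF assms(2)] assms(1) by blast
  ultimately show ?thesis
    unfolding splits_def using assms(4) self_in_component by blast
qed

lemma not_connected_in_splits:
  assumes "\<not> connected_in S"
  obtains A where "splits S A"
proof -
  obtain a b where "a \<in> S" "b \<in> S" "\<not> reach_in S a b"
    using assms unfolding connected_in_def by blast
  then have "splits S (component S a)"
    by (intro splits_component) (auto simp: component_def)
  then show ?thesis using that by blast
qed

lemma splits_complement: "splits X A \<Longrightarrow> splits X (X - A)"
  unfolding splits_def using E_sym by blast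

lemma reach_in_Diff:
  assumes "reach_in S v t" "v \<in> S - {r}"
  shows "reach_in (S - {r}) v t \<or> (\<exists>y\<in>S - {r}. E y r \<and> reach_in (S - {r}) v y)"
  using assms(1)
proof (induction rule: reach_in_induct)
  case (step y z)
  show ?case
  proof (cases "reach_in (S - {r}) v y")
    case True
    then have y: "y \<in> S - {r}" using reach_in_in assms(2) by blast
    show ?thesis
    proof (cases "z = r")
      case False
      then show ?thesis using reach_in_step[OF True y] step by blast
    qed (use True y step in blast)
  qed (use step in blast)
qed (simp add: reach_in_refl)

lemma connected_in_if_connected_graph:
  assumes "simple_graph V E" "connected_graph V E"
  shows "connected_in V"
proof -
  have "reach_in V a b" if "a \<in> V" "E\<^sup>*\<^sup>* a b" for a b
    using that(2,1)
  proof (induction rule: rtranclp_induct)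
    case (step y z)
    then show ?case using reach_in_step assms(1) unfolding simple_graph_def by blast
  qed (rule reach_in_refl)
  then show ?thesis using assms(2) unfolding connected_graph_def connected_in_def by blast
qed

section \<open>Complete components\<close>

definition in_complete_component :: "'a set \<Rightarrow> 'a \<Rightarrow> bool" where
  "in_complete_component S v \<longleftrightarrow> (\<forall>z\<in>nbr S v. closed_nbr S z = closed_nbr S v)"

lemma in_complete_component_closed_nbr:
  assumes "in_complete_component S u" "t \<in> closed_nbr S u"
  shows "closed_nbr S t = closed_nbr S u" "in_complete_component S t"
proof -
  have same: "closed_nbr S s = closed_nbr S u" if "s \<in> closed_nbr S u" for s
  proof (cases "s = u")
    case False
    then have "s \<in> nbr S u" using that by (simp add: closed_nbr_def)
    then show ?thesis using assms(1) by (simp add: in_complete_component_def)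
  qed simp
  then show "closed_nbr S t = closed_nbr S u" using assms(2) .
  have "closed_nbr S z = closed_nbr S t" if "z \<in> nbr S t" for z
  proof -
    have "z \<in> closed_nbr S u" using that same[OF assms(2)] by (auto simp: closed_nbr_def)
    then show ?thesis using same assms(2) by simp
  qed
  then show "in_complete_component S t" by (simp add: in_complete_component_def)
qed

lemma deg_in_complete_component:
  assumes "finite S" "in_complete_component S u" "t \<in> closed_nbr S u"
  shows "Suc (deg S t) = card (closed_nbr S u)"
  using card_closed_nbr[OF assms(1), of t] in_complete_component_closed_nbr(1)[OF assms(2,3)]
  by simp

lemma deg_eq_in_complete_component:
  assumes "finite S" "in_complete_component S u" "t \<in> closed_nbr S u"
  shows "deg S t = deg S u"
  using deg_in_complete_component[OF assms] deg_in_complete_component[OF assms(1,2), of u]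
  by (simp add: closed_nbr_def)

lemma in_complete_component_no_edge_out:
  assumes "in_complete_component S v" "s \<in> closed_nbr S v" "t \<in> S - closed_nbr S v"
  shows "\<not> E s t"
proof
  assume "E s t"
  then have "t \<in> closed_nbr S s" using assms(3) by (simp add: closed_nbr_def)
  then show False using in_complete_component_closed_nbr(1)[OF assms(1,2)] assms(3) by simp
qed

lemma connected_in_complete_component:
  assumes "connected_in S" "v \<in> S" "in_complete_component S v"
  shows "closed_nbr S v = S"
proof -
  have "closed_nbr S v \<noteq> {}" by (simp add: closed_nbr_def)
  then show ?thesis
    using connected_in_closed_subset_eq[OF assms(1) closed_nbr_subset[OF assms(2)]]
      in_complete_component_no_edge_out[OF assms(3)] by blast
qed

lemma deg_zero_in_complete_component: "finite S \<Longrightarrow> deg S v = 0 \<Longrightarrow> in_complete_component S v"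
  unfolding in_complete_component_def degree_def using finite_nbr[of S v] by simp

lemma deg_one_in_complete_component:
  assumes "finite S" "v \<in> S" "deg S v = 1" "\<forall>z\<in>nbr S v. deg S z = 1"
  shows "in_complete_component S v"
proof -
  obtain z where z: "nbr S v = {z}" using assms(3) by (metis card_1_singletonE degree_def)
  then have "z \<in> nbr S v" by simp
  then have "E z v" using E_sym by simp
  then have "v \<in> nbr S z" using assms(2) by simp
  moreover have "card (nbr S z) = 1" using assms(4) z by (simp add: degree_def)
  ultimately have "nbr S z = {v}" by (metis card_1_singletonE singletonD)
  then show ?thesis using z by (auto simp: in_complete_component_def closed_nbr_def)
qed

lemma in_complete_component_local:
  assumes "T \<subseteq> S" "\<forall>s\<in>T. \<forall>t\<in>S - T. \<not> E s t" "v \<in> T"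
  shows "nbr S v = nbr T v" "in_complete_component S v \<longleftrightarrow> in_complete_component T v"
proof -
  have nbr_eq: "nbr S z = nbr T z" if "z \<in> T" for z
    using assms(1,2) that unfolding neighbours_def by blast
  then show "nbr S v = nbr T v" using assms(3) .
  have "closed_nbr S z = closed_nbr T z" if "z \<in> T" for z
    using nbr_eq[OF that] by (simp add: closed_nbr_def)
  moreover have "nbr T v \<subseteq> T" by (rule nbr_subset)
  ultimately show "in_complete_component S v \<longleftrightarrow> in_complete_component T v"
    unfolding in_complete_component_def nbr_eq[OF assms(3)] using assms(3) by (metis subsetD)
qed

lemma in_complete_component_saturated:
  assumes "finite S" "T \<subseteq> S" "\<forall>s\<in>S. deg S s \<le> D" "t \<in> T"
    and "in_complete_component T t" "deg T t = D"
  shows "in_complete_component S t"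
proof -
  have "finite T" using assms(1,2) finite_subset by blast
  have nbr_eq: "nbr T z = nbr S z" if "z \<in> closed_nbr T t" for z
  proof -
    have "deg T z = deg T t" using deg_eq_in_complete_component[OF \<open>finite T\<close> assms(5) that] .
    moreover have "z \<in> S" using that closed_nbr_subset assms(2,4) by blast
    ultimately have "deg T z = deg S z"
      using deg_mono[OF assms(1,2), of z] assms(3,6) by (simp add: le_antisym)
    then show ?thesis using nbr_eq_if_deg_eq[OF assms(1,2)] by blast
  qed
  show ?thesis
    unfolding in_complete_component_def
  proof
    fix z assume "z \<in> nbr S t"
    then have z: "z \<in> closed_nbr T t" using nbr_eq[of t] by (simp add: closed_nbr_def)
    have "closed_nbr S z = closed_nbr T z" using nbr_eq[OF z] by (simp add: closed_nbr_def)
    also have "\<dots> = closed_nbr T t" using in_complete_component_closed_nbr(1)[OF assms(5) z] .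
    also have "\<dots> = closed_nbr S t" using nbr_eq[of t] by (simp add: closed_nbr_def)
    finally show "closed_nbr S z = closed_nbr S t" .
  qed
qed

lemma nonadjacent_nbrs_if_not_complete_component:
  assumes "v \<in> S" "\<not> in_complete_component S v"
  obtains x u w where "x \<in> S" "u \<in> S" "w \<in> S" "E x u" "E x w" "u \<noteq> w" "\<not> E u w"
proof -
  obtain z where z: "z \<in> nbr S v" "closed_nbr S z \<noteq> closed_nbr S v"
    using assms(2) unfolding in_complete_component_def by blast
  have "v \<in> closed_nbr S z" using z(1) assms(1) E_sym by (simp add: closed_nbr_def)
  then consider t where "t \<in> nbr S z" "t \<notin> closed_nbr S v"
    | t where "t \<in> nbr S v" "t \<notin> closed_nbr S z"
    using z unfolding closed_nbr_def by blast
  then show ?thesis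
  proof cases
    case (1 t)
    moreover have "E z v" using z(1) E_sym by simp
    ultimately show ?thesis
      using that[of z v t] z(1) assms(1) unfolding closed_nbr_def by auto
  next
    case (2 t)
    then show ?thesis
      using that[of v z t] z(1) assms(1) unfolding closed_nbr_def by auto
  qed
qed

lemma min_irregular_vertex:
  assumes "a \<in> S" "b \<in> nbr S a" "deg S a < deg S b"
  obtains v y where "v \<in> S" "y \<in> nbr S v" "deg S v < deg S y" "\<forall>u\<in>nbr S v. deg S v \<le> deg S u"
proof -
  define P where "P v \<longleftrightarrow> v \<in> S \<and> (\<exists>y\<in>nbr S v. deg S v < deg S y)" for v
  obtain v where "P v" and min: "\<forall>u. P u \<longrightarrow> deg S v \<le> deg S u"
    using ex_has_least_nat[of P a "deg S"] assms unfolding P_def by blast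
  then obtain y where v: "v \<in> S" "y \<in> nbr S v" "deg S v < deg S y" unfolding P_def by blast
  have "deg S v \<le> deg S u" if "u \<in> nbr S v" for u
  proof (rule ccontr)
    assume "\<not> deg S v \<le> deg S u"
    moreover have "v \<in> nbr S u" using that v(1) E_sym by simp
    moreover have "u \<in> S" using that by simp
    ultimately have "P u" unfolding P_def by (meson not_le)
    then show False using min \<open>\<not> deg S v \<le> deg S u\<close> by blast
  qed
  then show ?thesis using that v by blast
qed

lemma regular_if_no_irregular_edge:
  assumes "connected_in S" "v \<in> S" "\<forall>a\<in>S. \<forall>b\<in>nbr S a. \<not> deg S a < deg S b"
  shows "\<forall>t\<in>S. deg S t = deg S v"
proof -
  have "\<forall>a\<in>S. \<forall>b\<in>S. E a b \<longrightarrow> deg S a = deg S b"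
  proof (intro ballI impI)
    fix a b assume "a \<in> S" "b \<in> S" "E a b"
    moreover have "E b a" using \<open>E a b\<close> by (rule E_sym)
    ultimately show "deg S a = deg S b" using assms(3) by (meson in_nbr_iff not_less_iff_gr_or_eq)
  qed
  then show ?thesis using connected_in_const[OF assms(1)] assms(2) by blast
qed

lemma complete_component_Diff_adjacent:
  assumes "finite S" "\<forall>t\<in>S. deg S t = d" "v \<in> S" "u \<in> S - {v}"
    and "in_complete_component (S - {v}) u" "z \<in> closed_nbr (S - {v}) u" "E z v"
  shows "in_complete_component S v"
proof -
  define K where "K = closed_nbr (S - {v}) u"
  have K: "K \<subseteq> S - {v}" using closed_nbr_subset[OF assms(4)] unfolding K_def .
  have card_K: "card K = Suc (deg (S - {v}) t)" if "t \<in> K" for t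
    using deg_in_complete_component[OF _ assms(5)] assms(1) that unfolding K_def by simp
  have deg_Diff_v: "deg (S - {v}) t = (if E t v then d - 1 else d)" if "t \<in> S" for t
    using deg_Diff_singleton[OF assms(1,3)] assms(2) that by simp
  have "v \<in> nbr S z" using assms(3,7) by simp
  then have "0 < deg S z" using deg_pos_if_nbr[OF assms(1)] by blast
  then have "0 < d" using assms(2,6) K unfolding K_def by auto
  have "E t v" if "t \<in> K" for t
  proof (rule ccontr)
    assume "\<not> E t v"
    then have "deg (S - {v}) t = d" using deg_Diff_v K that by auto
    moreover have "deg (S - {v}) z = d - 1" using deg_Diff_v K assms(6,7) unfolding K_def by auto
    moreover have "deg (S - {v}) t = deg (S - {v}) z"
      using card_K[OF that] card_K assms(6) unfolding K_def by simp
    ultimately show False using \<open>0 < d\<close> by simp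
  qed
  then have sub: "K \<subseteq> nbr S v" using K E_sym by (meson DiffD1 in_nbr_iff subsetD subsetI)
  have "card K = d" using card_K deg_Diff_v[of z] K assms(6,7) \<open>0 < d\<close> unfolding K_def by auto
  then have K_eq: "K = nbr S v"
    using card_subset_eq[OF finite_nbr[OF assms(1)] sub] assms(2,3) by (simp add: degree_def)
  show ?thesis
    unfolding in_complete_component_def
  proof
    fix y assume y: "y \<in> nbr S v"
    then have "y \<in> K" "y \<noteq> v" using K_eq K by auto
    moreover have "E y v" using y E_sym by simp
    ultimately have "closed_nbr S y = insert v (closed_nbr (S - {v}) y)"
      using assms(3) unfolding closed_nbr_def by auto
    also have "closed_nbr (S - {v}) y = K"
      using in_complete_component_closed_nbr(1)[OF assms(5)] \<open>y \<in> K\<close> unfolding K_def by simp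
    also have "insert v K = closed_nbr S v" using K_eq by (simp add: closed_nbr_def)
    finally show "closed_nbr S y = closed_nbr S v" .
  qed
qed

lemma regular_Diff_no_complete_component:
  assumes "finite S" "connected_in S" "\<forall>t\<in>S. deg S t = d" "\<forall>t\<in>S. \<not> in_complete_component S t"
    and "v \<in> S" "u \<in> S - {v}"
  shows "\<not> in_complete_component (S - {v}) u"
proof
  assume cc: "in_complete_component (S - {v}) u"
  define K where "K = closed_nbr (S - {v}) u"
  have K: "K \<subseteq> S - {v}" using closed_nbr_subset[OF assms(6)] unfolding K_def .
  show False
  proof (cases "\<exists>z\<in>K. E z v")
    case True
    then show False
      using complete_component_Diff_adjacent[OF assms(1,3,5,6) cc] assms(4,5)
      unfolding K_def by blast
  next
    case False
    have "\<forall>s\<in>K. \<forall>t\<in>S - K. \<not> E s t"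
    proof (intro ballI notI)
      fix s t assume st: "s \<in> K" "t \<in> S - K" "E s t"
      then have "t \<noteq> v" using False by blast
      then show False
        using in_complete_component_no_edge_out[OF cc, of s t] st unfolding K_def by blast
    qed
    moreover have "K \<noteq> {}" unfolding K_def closed_nbr_def by blast
    ultimately have "K = S" using connected_in_closed_subset_eq[OF assms(2)] K by blast
    then show False using K assms(5) by blast
  qed
qed

lemma complete_graph_if_complete_component:
  assumes "finite V" "connected_in V" "v \<in> V" "in_complete_component V v" "max_degree V E = \<Delta>"
  shows "is_complete_graph V E (\<Delta> + 1)"
proof -
  have closed: "closed_nbr V u = V" if "u \<in> V" for u
  proof -
    have "u \<in> closed_nbr V v" using connected_in_complete_component[OF assms(2-4)] that by simp
    then have "in_complete_component V u"
      by (rule in_complete_component_closed_nbr(2)[OF assms(4)])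
    then show ?thesis using connected_in_complete_component[OF assms(2) that] by blast
  qed
  have deg_eq: "degree V E u = card V - 1" if "u \<in> V" for u
    using card_closed_nbr[OF assms(1), of u] closed[OF that] by simp
  have "degree V E ` V = {card V - 1}"
  proof
    show "degree V E ` V \<subseteq> {card V - 1}" using deg_eq by blast
    show "{card V - 1} \<subseteq> degree V E ` V"
      using deg_eq[OF assms(3)] assms(3) by (simp add: rev_image_eqI)
  qed
  then have "card V = \<Delta> + 1"
    using assms(3,5) card_closed_nbr[OF assms(1), of v] closed[OF assms(3)]
    unfolding max_degree_def by simp
  moreover have "E u w" if "u \<in> V" "w \<in> V" "u \<noteq> w" for u w
    using closed[OF that(1)] that(2,3) by (auto simp: closed_nbr_def)
  ultimately show ?thesis unfolding is_complete_graph_def by blast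
qed

lemma in_G_Delta_no_complete_component:
  assumes "in_G_Delta \<Delta> V E" "v \<in> V"
  shows "\<not> in_complete_component V v"
proof
  assume "in_complete_component V v"
  moreover have "simple_graph V E" "connected_graph V E" "max_degree V E = \<Delta>"
    "\<not> is_complete_graph V E (\<Delta> + 1)"
    using assms(1) unfolding in_G_Delta_def by auto
  ultimately show False
    using complete_graph_if_complete_component connected_in_if_connected_graph assms(2)
    unfolding simple_graph_def by blast
qed

section \<open>Brooks' bound\<close>

definition proper_colouring :: "'a set \<Rightarrow> ('a \<Rightarrow> 'b) \<Rightarrow> bool" where
  "proper_colouring S col \<longleftrightarrow> (\<forall>u\<in>S. \<forall>v\<in>S. E u v \<longrightarrow> col u \<noteq> col v)"

lemma card_le_mult_alpha:
  assumes "finite S" "\<forall>v\<in>S. col v < k" "proper_colouring S col"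
  shows "card S \<le> k * \<alpha> S"
proof -
  have "col ` S \<subseteq> {..<k}" using assms(2) by auto
  then have "card S = (\<Sum>i<k. card {v\<in>S. col v = i})"
    using sum.group[OF assms(1) finite_lessThan, where g = col and h = "\<lambda>_. 1::nat"] by simp
  also have "\<dots> \<le> (\<Sum>i<k. \<alpha> S)"
  proof (rule sum_mono)
    fix i
    have "independent_set S E {v\<in>S. col v = i}"
      using assms(3) unfolding independent_set_def proper_colouring_def by blast
    then show "card {v\<in>S. col v = i} \<le> \<alpha> S" using card_le_alpha assms(1) by blast
  qed
  finally show ?thesis by simp
qed

lemma proper_colouring_extend:
  assumes "finite S" "r \<in> S" "deg S r < card (L r)"
    and "\<forall>v\<in>S - {r}. col v \<in> L v" "proper_colouring (S - {r}) col"
  shows "\<exists>col'. (\<forall>v\<in>S. col' v \<in> L v) \<and> proper_colouring S col'"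
proof -
  have "\<not> L r \<subseteq> col ` nbr S r"
  proof
    assume "L r \<subseteq> col ` nbr S r"
    then have "card (L r) \<le> card (col ` nbr S r)"
      using assms(1) finite_nbr by (intro card_mono) auto
    also have "\<dots> \<le> deg S r"
      unfolding degree_def by (rule card_image_le) (use assms(1) finite_nbr in auto)
    finally show False using assms(3) by simp
  qed
  then obtain k where k: "k \<in> L r" "k \<notin> col ` nbr S r" by blast
  have "proper_colouring S (col(r := k))"
    unfolding proper_colouring_def
  proof (intro ballI impI)
    fix a b assume ab: "a \<in> S" "b \<in> S" "E a b"
    consider "a = r" | "b = r" | "a \<noteq> r" "b \<noteq> r" by blast
    then show "(col(r := k)) a \<noteq> (col(r := k)) b"
    proof cases
      case 1
      then have "b \<in> nbr S r" "b \<noteq> r" using ab E_irrefl by auto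
      then show ?thesis using 1 k(2) by force
    next
      case 2
      then have "a \<in> nbr S r" "a \<noteq> r" using ab E_sym E_irrefl by auto
      then show ?thesis using 2 k(2) by force
    next
      case 3
      then show ?thesis using assms(5) ab unfolding proper_colouring_def by auto
    qed
  qed
  moreover have "\<forall>v\<in>S. (col(r := k)) v \<in> L v" using assms(4) k by auto
  ultimately show ?thesis by blast
qed

lemma slack_reachable_Diff:
  assumes "finite S" "\<forall>v\<in>S. deg S v \<le> card (L v)"
    and "\<forall>v\<in>S. \<exists>s. reach_in S v s \<and> deg S s < card (L s)" "r \<in> S" "v \<in> S - {r}"
  shows "\<exists>s. reach_in (S - {r}) v s \<and> deg (S - {r}) s < card (L s)"
proof -
  obtain s where s: "reach_in S v s" "deg S s < card (L s)" using assms(3,5) by blast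
  show ?thesis
    using reach_in_Diff[OF s(1) assms(5)]
  proof
    assume "reach_in (S - {r}) v s"
    then show ?thesis using s(2) deg_mono[OF assms(1), of "S - {r}" s] by force
  next
    assume "\<exists>y\<in>S - {r}. E y r \<and> reach_in (S - {r}) v y"
    then obtain y where y: "y \<in> S - {r}" "E y r" "reach_in (S - {r}) v y" by blast
    then have "r \<in> nbr S y" using assms(4) by simp
    then have "0 < deg S y" using deg_pos_if_nbr[OF assms(1)] by blast
    then have "deg (S - {r}) y < deg S y" using deg_Diff_singleton[OF assms(1,4)] y(2) by simp
    then show ?thesis using y(1,3) assms(2) by (meson DiffD1 less_le_trans)
  qed
qed

text \<open>Delete a vertex \<open>r\<close> with a spare colour: its neighbours gain one, so the rest is
  colourable by induction, and \<open>r\<close> still sees a free colour.\<close>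

lemma list_colouring:
  assumes "finite S" "\<forall>v\<in>S. deg S v \<le> card (L v)"
    and "\<forall>v\<in>S. \<exists>s. reach_in S v s \<and> deg S s < card (L s)"
  shows "\<exists>col. (\<forall>v\<in>S. col v \<in> L v) \<and> proper_colouring S col"
  using assms
proof (induction S rule: finite_psubset_induct)
  case (psubset S)
  show ?case
  proof (cases "S = {}")
    case True
    then show ?thesis by (simp add: proper_colouring_def)
  next
    case False
    then obtain v where "v \<in> S" by blast
    then obtain r where r: "reach_in S v r" "deg S r < card (L r)" using psubset.prems by blast
    have "r \<in> S" using reach_in_in[OF r(1) \<open>v \<in> S\<close>] .
    have "\<forall>u\<in>S - {r}. deg (S - {r}) u \<le> card (L u)"
      using psubset.prems(1) deg_mono[OF psubset.hyps(1), of "S - {r}"]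
      by (meson DiffD1 Diff_subset le_trans)
    moreover have "\<forall>u\<in>S - {r}. \<exists>s. reach_in (S - {r}) u s \<and> deg (S - {r}) s < card (L s)"
      using slack_reachable_Diff[OF psubset.hyps(1) psubset.prems \<open>r \<in> S\<close>] by blast
    ultimately obtain col where "\<forall>u\<in>S - {r}. col u \<in> L u" "proper_colouring (S - {r}) col"
      using psubset.IH[of "S - {r}"] \<open>r \<in> S\<close> by blast
    then show ?thesis
      using proper_colouring_extend[of S r L col] psubset.hyps(1) \<open>r \<in> S\<close> r(2) by blast
  qed
qed

lemma colouring_Diff_nbr_pair:
  assumes "finite S" "\<forall>v\<in>S. deg S v = D" "2 \<le> D"
    and "x \<in> S" "u \<in> S" "w \<in> S" "E x u" "E x w" "u \<noteq> w" "connected_in (S - {u, w})"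
  obtains col where "\<forall>v\<in>S - {u, w}. col v < D \<and> (E v u \<or> E v w \<longrightarrow> col v \<noteq> 0)"
    "proper_colouring (S - {u, w}) col"
proof -
  txt \<open>Colour \<open>0\<close> is kept for \<open>u\<close> and \<open>w\<close>. The vertex \<open>x\<close> loses two neighbours but
    only one colour, so it has a spare colour, and all of \<open>S - {u, w}\<close> reaches \<open>x\<close>.\<close>
  define L where "L v = {0..<D} - (if E v u \<or> E v w then {0} else {})" for v
  have card_L: "card (L v) = (if E v u \<or> E v w then D - 1 else D)" for v
    using assms(3) by (simp add: L_def)
  have deg_Diff_uw: "deg (S - {u, w}) v = D - card (nbr S v \<inter> {u, w})" if "v \<in> S" for v
    using deg_Diff[OF assms(1)] assms(2) that by simp
  have "\<forall>v\<in>S - {u, w}. deg (S - {u, w}) v \<le> card (L v)"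
  proof
    fix v assume v: "v \<in> S - {u, w}"
    have "E v u \<or> E v w \<longleftrightarrow> nbr S v \<inter> {u, w} \<noteq> {}" using assms(5,6) by auto
    then have "E v u \<or> E v w \<longleftrightarrow> 0 < card (nbr S v \<inter> {u, w})" by (simp add: card_gt_0_iff)
    then show "deg (S - {u, w}) v \<le> card (L v)" using deg_Diff_uw v card_L by auto
  qed
  moreover have "\<forall>v\<in>S - {u, w}. \<exists>s. reach_in (S - {u, w}) v s \<and> deg (S - {u, w}) s < card (L s)"
  proof -
    have "nbr S x \<inter> {u, w} = {u, w}" using assms(4-8) by auto
    then have "deg (S - {u, w}) x < card (L x)"
      using deg_Diff_uw[OF assms(4)] card_L assms(3,7,9) by simp
    moreover have "x \<in> S - {u, w}" using assms(4,7,8) E_irrefl by auto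
    ultimately show ?thesis using assms(10) unfolding connected_in_def by blast
  qed
  ultimately obtain col where col: "\<forall>v\<in>S - {u, w}. col v \<in> L v"
    "proper_colouring (S - {u, w}) col"
    using list_colouring[of "S - {u, w}" L] assms(1) by blast
  have "\<forall>v\<in>S - {u, w}. col v < D \<and> (E v u \<or> E v w \<longrightarrow> col v \<noteq> 0)"
  proof
    fix v assume "v \<in> S - {u, w}"
    then have "col v \<in> L v" using col(1) by blast
    then show "col v < D \<and> (E v u \<or> E v w \<longrightarrow> col v \<noteq> 0)"
      unfolding L_def by (auto split: if_splits)
  qed
  then show ?thesis using that col(2) by blast
qed

lemma brooks_colouring:
  assumes "finite S" "\<forall>v\<in>S. deg S v = D" "2 \<le> D"
    and "x \<in> S" "u \<in> S" "w \<in> S" "E x u" "E x w" "u \<noteq> w" "\<not> E u w"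
    and "connected_in (S - {u, w})"
  obtains col where "\<forall>v\<in>S. col v < D" "proper_colouring S col"
proof -
  obtain col where col: "\<forall>v\<in>S - {u, w}. col v < D \<and> (E v u \<or> E v w \<longrightarrow> col v \<noteq> 0)"
    "proper_colouring (S - {u, w}) col"
    using colouring_Diff_nbr_pair[OF assms(1-9,11)] by blast
  have "\<forall>v\<in>S. (col(u := 0, w := 0)) v < D" using col(1) assms(3) by auto
  moreover have "proper_colouring S (col(u := 0, w := 0))"
    unfolding proper_colouring_def
  proof (intro ballI impI)
    fix a b assume ab: "a \<in> S" "b \<in> S" "E a b"
    have "E b a" using ab(3) E_sym by blast
    have "\<not> (a \<in> {u, w} \<and> b \<in> {u, w})"
      using ab(3) \<open>E b a\<close> assms(10) E_irrefl by blast
    then consider "a \<in> {u, w}" "b \<in> S - {u, w}" | "b \<in> {u, w}" "a \<in> S - {u, w}"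
      | "a \<in> S - {u, w}" "b \<in> S - {u, w}"
      using ab(1,2) by blast
    then show "(col(u := 0, w := 0)) a \<noteq> (col(u := 0, w := 0)) b"
    proof cases
      case 1
      then show ?thesis using col(1) \<open>E b a\<close> by auto
    next
      case 2
      then show ?thesis using col(1) ab(3) by auto
    next
      case 3
      then show ?thesis using col(2) ab(3) unfolding proper_colouring_def by auto
    qed
  qed
  ultimately show ?thesis using that by blast
qed

lemma cut_vertex_side_bound:
  assumes "finite S" "x \<in> S" "splits (S - {x}) A" "\<And>T. T \<subset> S \<Longrightarrow> card T \<le> D * \<alpha> T"
    and "\<alpha> (insert x A) \<le> \<alpha> A"
  shows "card S \<le> D * \<alpha> S"
proof -
  define B where "B = S - {x} - A"
  have A: "A \<subseteq> S - {x}" "B \<noteq> {}" "\<forall>s\<in>A. \<forall>t\<in>B. \<not> E s t"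
    using assms(3) unfolding splits_def B_def by auto
  have B: "B \<subseteq> S - {x}" "A \<inter> B = {}" unfolding B_def by blast+
  have fin: "finite A" "finite B" using assms(1) A(1) B(1) by (auto intro: finite_subset)
  have S: "S = insert x A \<union> B" using A(1) assms(2) unfolding B_def by blast
  have disj: "insert x A \<inter> B = {}" using B by blast
  have "insert x A \<subset> S" "B \<subset> S" using S disj A(2) B(1) assms(2) by blast+
  then have bounds: "card (insert x A) \<le> D * \<alpha> (insert x A)" "card B \<le> D * \<alpha> B"
    using assms(4) by blast+
  have "card (insert x A \<union> B) = card (insert x A) + card B"
    using fin disj by (intro card_Un_disjoint) auto
  then have "card S = card (insert x A) + card B" by (simp only: S)
  also have "\<dots> \<le> D * \<alpha> (insert x A) + D * \<alpha> B" using bounds by simp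
  also have "\<dots> \<le> D * (\<alpha> A + \<alpha> B)" using assms(5) by (simp add: add_mult_distrib2)
  also have "\<alpha> A + \<alpha> B \<le> \<alpha> (A \<union> B)" by (rule alpha_Un[OF fin B(2) A(3)])
  also have "\<alpha> (A \<union> B) \<le> \<alpha> S" by (rule alpha_mono[OF assms(1)]) (use A(1) B(1) in blast)
  finally show ?thesis by simp
qed

lemma alpha_Un_Diff_nbr:
  assumes "finite S" "x \<in> S" "A \<union> B \<subseteq> S - {x}" "A \<inter> B = {}" "\<forall>s\<in>A. \<forall>t\<in>B. \<not> E s t"
  shows "Suc (\<alpha> (A - nbr A x) + \<alpha> (B - nbr B x)) \<le> \<alpha> S"
proof -
  have fin: "finite A" "finite B" using assms(1,3) by (auto intro: finite_subset)
  have "\<alpha> (A - nbr A x) + \<alpha> (B - nbr B x) \<le> \<alpha> ((A - nbr A x) \<union> (B - nbr B x))"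
    by (rule alpha_Un) (use fin assms(4,5) in auto)
  also have "\<dots> \<le> \<alpha> (S - closed_nbr S x)"
    by (rule alpha_mono) (use assms(1,3) in \<open>auto simp: closed_nbr_def\<close>)
  finally show ?thesis using alpha_Diff_closed_nbr[OF assms(1,2)] by linarith
qed

text \<open>If adding \<open>x\<close> to one side of the cut does not raise \<open>\<alpha>\<close>, the bounds for the two sides
  add up. Otherwise both sides have a maximum independent set avoiding the neighbours of \<open>x\<close>,
  and \<open>x\<close> extends their union.\<close>

lemma cut_vertex_bound:
  assumes "finite S" "x \<in> S" "splits (S - {x}) A" "\<And>T. T \<subset> S \<Longrightarrow> card T \<le> D * \<alpha> T"
  shows "card S \<le> D * \<alpha> S"
proof -
  define B where "B = S - {x} - A"
  have A: "A \<subseteq> S - {x}" "A \<noteq> {}" "\<forall>s\<in>A. \<forall>t\<in>B. \<not> E s t"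
    using assms(3) unfolding splits_def B_def by auto
  have B: "splits (S - {x}) B" "B \<subseteq> S - {x}" "A \<inter> B = {}"
    using splits_complement[OF assms(3)] A(1) unfolding B_def by blast+
  show ?thesis
  proof (cases "\<alpha> (insert x A) \<le> \<alpha> A \<or> \<alpha> (insert x B) \<le> \<alpha> B")
    case True
    then show ?thesis
      using cut_vertex_side_bound[OF assms] cut_vertex_side_bound[OF assms(1,2) B(1) assms(4)]
      by blast
  next
    case False
    have fin: "finite A" "finite B" using assms(1) A(1) B(2) by (auto intro: finite_subset)
    have "\<alpha> A \<le> \<alpha> (A - nbr A x)" "\<alpha> B \<le> \<alpha> (B - nbr B x)"
      using False alpha_insert[OF fin(1), of x] alpha_insert[OF fin(2), of x] by auto
    then have alpha_S: "Suc (\<alpha> A + \<alpha> B) \<le> \<alpha> S"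
      using alpha_Un_Diff_nbr[OF assms(1,2) _ B(3) A(3)] A(1) B(2) by fastforce
    have "{x} \<subset> S" "A \<subset> S" "B \<subset> S" using A(1,2) B(2) assms(2) by blast+
    then have "card {x} \<le> D * \<alpha> {x}" and bounds: "card A \<le> D * \<alpha> A" "card B \<le> D * \<alpha> B"
      using assms(4) by blast+
    then have "1 \<le> D" by (cases D) auto
    have S: "S = insert x (A \<union> B)" using A(1) assms(2) unfolding B_def by blast
    have "x \<notin> A \<union> B" using A(1) B(2) by blast
    then have "card (insert x (A \<union> B)) = Suc (card A + card B)"
      using fin B(3) by (simp add: card_Un_disjoint)
    then have "card S = Suc (card A + card B)" by (simp only: S)
    also have "\<dots> \<le> Suc (D * \<alpha> A + D * \<alpha> B)" using bounds by simp
    also have "\<dots> \<le> D * Suc (\<alpha> A + \<alpha> B)" using \<open>1 \<le> D\<close> by (simp add: algebra_simps)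
    also have "\<dots> \<le> D * \<alpha> S" using alpha_S by (rule mult_le_mono2)
    finally show ?thesis .
  qed
qed

lemma splits_insert_nonadjacent:
  assumes "splits (S - {x, y}) A" "x \<in> S" "x \<noteq> y" "\<forall>u\<in>A. \<not> E x u"
  shows "splits (S - {y}) A"
proof -
  have "A \<subseteq> S - {x, y}" "A \<noteq> {}" "\<forall>s\<in>A. \<forall>t\<in>S - {x, y} - A. \<not> E s t"
    using assms(1) unfolding splits_def by auto
  moreover have "\<forall>s\<in>A. \<not> E s x" using assms(4) E_sym by blast
  ultimately show ?thesis using assms(2,3) unfolding splits_def by blast
qed

lemma two_connected_nbr_in_part:
  assumes "\<forall>z\<in>S. connected_in (S - {z})" "x \<in> S" "y \<in> S" "x \<noteq> y" "splits (S - {x, y}) A"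
  shows "\<exists>u\<in>A. E x u"
  using splits_insert_nonadjacent[OF assms(5,2,4)] connected_in_not_splits assms(1,3) by blast

text \<open>Here \<open>{x, y}\<close> is a 2-cut of a 2-connected graph whose part \<open>A\<close> is as small as
  possible. The minimality makes every component of \<open>A - {u}\<close>, for \<open>u \<in> A\<close>, adjacent to both
  \<open>x\<close> and \<open>y\<close>.\<close>

context
  fixes S :: "'a set" and x y :: 'a and A :: "'a set"
  assumes finite_S: "finite S" and two_connected: "\<forall>z\<in>S. connected_in (S - {z})"
    and deg_ge_3: "\<forall>t\<in>S. 3 \<le> deg S t"
    and xy: "x \<in> S" "y \<in> S" "x \<noteq> y" and A_splits: "splits (S - {x, y}) A"
    and A_minimal: "\<And>a b Z. a \<in> S \<Longrightarrow> b \<in> S \<Longrightarrow> a \<noteq> b \<Longrightarrow> splits (S - {a, b}) Z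
      \<Longrightarrow> card A \<le> card Z"
begin

lemma two_cut_min_part_component_adjacent:
  assumes "u \<in> A" "z \<in> A - {u}" "q \<in> {x, y}"
  shows "\<exists>t\<in>component (A - {u}) z. E t q"
proof (rule ccontr)
  assume no_edge: "\<not> ?thesis"
  define Z where "Z = component (A - {u}) z"
  obtain p where pq: "{p, q} = {x, y}" using assms(3) by blast
  have A: "A \<subseteq> S - {x, y}" "\<forall>s\<in>A. \<forall>t\<in>S - {x, y} - A. \<not> E s t"
    using A_splits unfolding splits_def by auto
  have p: "p \<in> S" "p \<noteq> q" "p \<notin> A" "q \<in> S" "q \<notin> A"
    using pq xy A(1) by (auto simp: doubleton_eq_iff)
  have Z: "Z \<subseteq> A - {u}" using component_subset[OF assms(2)] unfolding Z_def .
  have "splits (S - {u, p}) Z"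
    unfolding Z_def
  proof (rule splits_component)
    show "A - {u} \<subseteq> S - {u, p}" using A(1) p by blast
    show "\<forall>s\<in>component (A - {u}) z. \<forall>t\<in>S - {u, p} - (A - {u}). \<not> E s t"
    proof (intro ballI notI)
      fix s t assume st: "s \<in> component (A - {u}) z" "t \<in> S - {u, p} - (A - {u})" "E s t"
      have "s \<in> A" using st(1) Z unfolding Z_def by blast
      show False
      proof (cases "t \<in> {x, y}")
        case True
        then have "t = q" using st(2) pq by auto
        then show False using no_edge st(1,3) by blast
      next
        case False
        then show False using A(2) \<open>s \<in> A\<close> st(2,3) by blast
      qed
    qed
    show "S - {u, p} - component (A - {u}) z \<noteq> {}"
      using p Z assms(1) unfolding Z_def by blast
  qed (use assms(2) in blast)
  then have "card A \<le> card Z" using A_minimal[of u p] assms(1) A(1) p(1,3) by blast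
  moreover have "Z \<subset> A" using Z assms(1) by blast
  then have "card Z < card A"
    using finite_S A(1) by (meson finite_subset psubset_card_mono Diff_subset)
  ultimately show False by simp
qed

lemma two_cut_min_part_reaches:
  assumes "u \<in> A" "w \<in> S - {x, y} - A" "z \<in> A - {u}" "q \<in> {x, y}"
  shows "reach_in (S - {u, w}) z q"
proof -
  obtain t where t: "t \<in> component (A - {u}) z" "E t q"
    using two_cut_min_part_component_adjacent[OF assms(1,3,4)] by blast
  have sub: "A - {u} \<subseteq> S - {u, w}" using A_splits assms(2) unfolding splits_def by blast
  have "reach_in (S - {u, w}) z t" using reach_in_component[OF t(1) sub] .
  moreover have "t \<in> S - {u, w}" using component_subset[OF assms(3)] t(1) sub by blast
  moreover have "q \<in> S - {u, w}" using xy assms(1,2,4) A_splits unfolding splits_def by blast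
  ultimately show ?thesis using reach_in_step t(2) by blast
qed

lemma two_cut_reach_x_y:
  assumes "u \<in> A" "w \<in> S - {x, y} - A"
  shows "reach_in (S - {u, w}) x y"
proof -
  have A: "A \<subseteq> S - {x, y}" "\<forall>s\<in>A. \<forall>t\<in>S - {x, y} - A. \<not> E s t"
    using A_splits unfolding splits_def by auto
  have "A - {u} \<noteq> {}"
  proof
    assume "A - {u} = {}"
    have "t \<in> {x, y}" if "t \<in> nbr S u" for t
    proof (rule ccontr)
      assume "t \<notin> {x, y}"
      moreover have "t \<noteq> u" using that E_irrefl by auto
      ultimately have "t \<in> S - {x, y} - A" using that \<open>A - {u} = {}\<close> by auto
      then show False using A(2) assms(1) that by auto
    qed
    then have "nbr S u \<subseteq> {x, y}" by blast
    then have "deg S u \<le> card {x, y}" unfolding degree_def by (simp add: card_mono)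
    also have "\<dots> \<le> 2" by (simp add: card_insert_if)
    finally have "deg S u \<le> 2" .
    moreover have "u \<in> S" using assms(1) A(1) by blast
    ultimately show False using deg_ge_3 by fastforce
  qed
  then obtain z where z: "z \<in> A - {u}" by blast
  obtain t where t: "t \<in> component (A - {u}) z" "E t x"
    using two_cut_min_part_component_adjacent[OF assms(1) z] by blast
  have t_in: "t \<in> A - {u}" using component_subset[OF z] t(1) by blast
  have "x \<in> S - {u, w}" "t \<in> S - {u, w}" using xy assms t_in A(1) by auto
  moreover have "E x t" using t(2) by (rule E_sym)
  ultimately have "reach_in (S - {u, w}) x t" by (rule reach_in_edge)
  then show ?thesis using two_cut_min_part_reaches[OF assms t_in] reach_in_trans by blast
qed

lemma two_cut_other_part_component_adjacent:
  assumes "w \<in> S - {x, y} - A" "z \<in> S - {x, y} - A - {w}"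
  shows "\<exists>t\<in>component (S - {x, y} - A - {w}) z. E t x \<or> E t y"
proof (rule ccontr)
  assume no_edge: "\<not> ?thesis"
  define B where "B = S - {x, y} - A - {w}"
  have "splits (S - {w}) (component B z)"
  proof (rule splits_component)
    show "B \<subseteq> S - {w}" "z \<in> B" using assms(2) unfolding B_def by blast+
    show "\<forall>s\<in>component B z. \<forall>t\<in>S - {w} - B. \<not> E s t"
    proof (intro ballI notI)
      fix s t assume st: "s \<in> component B z" "t \<in> S - {w} - B" "E s t"
      then have "s \<in> S - {x, y} - A" using component_subset[OF \<open>z \<in> B\<close>] unfolding B_def by blast
      have "t \<in> {x, y} \<or> t \<in> A" using st(2) unfolding B_def by blast
      then show False
      proof
        assume "t \<in> {x, y}"
        then show False using no_edge st(1,3) unfolding B_def by blast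
      next
        assume "t \<in> A"
        moreover have "E t s" using st(3) E_sym by blast
        ultimately show False using A_splits \<open>s \<in> S - {x, y} - A\<close> unfolding splits_def by blast
      qed
    qed
    show "S - {w} - component B z \<noteq> {}"
      using xy assms(1) component_subset[OF \<open>z \<in> B\<close>] unfolding B_def by blast
  qed
  then show False using two_connected connected_in_not_splits assms(1) by blast
qed

lemma two_cut_other_part_reaches_y:
  assumes "u \<in> A" "w \<in> S - {x, y} - A" "z \<in> S - {x, y} - A - {w}"
  shows "reach_in (S - {u, w}) z y"
proof -
  define B where "B = S - {x, y} - A - {w}"
  obtain t where t: "t \<in> component B z" "E t x \<or> E t y"
    using two_cut_other_part_component_adjacent[OF assms(2,3)] unfolding B_def by blast
  have sub: "B \<subseteq> S - {u, w}" using assms(1) unfolding B_def by blast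
  have "z \<in> B" using assms(3) unfolding B_def .
  then have "t \<in> S - {u, w}" using component_subset t(1) sub by blast
  moreover have "reach_in (S - {u, w}) z t" using reach_in_component[OF t(1) sub] .
  moreover have "x \<in> S - {u, w}" "y \<in> S - {u, w}"
    using xy assms(1,2) A_splits unfolding splits_def by auto
  ultimately have "reach_in (S - {u, w}) z x \<or> reach_in (S - {u, w}) z y"
    using t(2) reach_in_step by blast
  then show ?thesis using two_cut_reach_x_y[OF assms(1,2)] reach_in_trans by blast
qed

lemma two_cut_triple:
  obtains u w where "u \<in> S" "w \<in> S" "E x u" "E x w" "u \<noteq> w" "\<not> E u w"
    "connected_in (S - {u, w})"
proof -
  obtain u where u: "u \<in> A" "E x u"
    using two_connected_nbr_in_part[OF two_connected xy A_splits] by blast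
  obtain w where w: "w \<in> S - {x, y} - A" "E x w"
    using two_connected_nbr_in_part[OF two_connected xy splits_complement[OF A_splits]] by blast
  have A: "A \<subseteq> S - {x, y}" "\<forall>s\<in>A. \<forall>t\<in>S - {x, y} - A. \<not> E s t"
    using A_splits unfolding splits_def by auto
  have "connected_in (S - {u, w})"
  proof (rule connected_inI, rule ballI)
    fix z assume "z \<in> S - {u, w}"
    then consider "z = x" | "z = y" | "z \<in> A - {u}" | "z \<in> S - {x, y} - A - {w}" by blast
    then show "reach_in (S - {u, w}) z y"
    proof cases
      case 1
      then show ?thesis using two_cut_reach_x_y[OF u(1) w(1)] by simp
    next
      case 2
      then show ?thesis by (simp add: reach_in_refl)
    next
      case 3
      then show ?thesis using two_cut_min_part_reaches[OF u(1) w(1)] by blast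
    next
      case 4
      then show ?thesis using two_cut_other_part_reaches_y[OF u(1) w(1)] by blast
    qed
  qed
  moreover have "u \<in> S" "w \<in> S" "u \<noteq> w" "\<not> E u w" using u w A by auto
  ultimately show ?thesis using that u(2) w(2) by blast
qed

end

lemma two_connected_triple:
  assumes "finite S" "\<forall>t\<in>S. 3 \<le> deg S t" "\<forall>z\<in>S. connected_in (S - {z})"
    and "v \<in> S" "\<not> in_complete_component S v"
  obtains x u w where "x \<in> S" "u \<in> S" "w \<in> S" "E x u" "E x w" "u \<noteq> w" "\<not> E u w"
    "connected_in (S - {u, w})"
proof (cases "\<forall>a\<in>S. \<forall>b\<in>S. a \<noteq> b \<longrightarrow> connected_in (S - {a, b})")
  case True
  obtain x u w where "x \<in> S" "u \<in> S" "w \<in> S" "E x u" "E x w" "u \<noteq> w" "\<not> E u w"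
    using nonadjacent_nbrs_if_not_complete_component[OF assms(4,5)] by blast
  moreover have "connected_in (S - {u, w})" using True calculation(2,3,6) by blast
  ultimately show ?thesis by (rule that)
next
  case False
  define P where "P = (\<lambda>(a, b, Z). a \<in> S \<and> b \<in> S \<and> a \<noteq> b \<and> splits (S - {a, b}) Z)"
  obtain a b where "a \<in> S" "b \<in> S" "a \<noteq> b" "\<not> connected_in (S - {a, b})"
    using False by blast
  moreover obtain Z where "splits (S - {a, b}) Z"
    using not_connected_in_splits calculation(4) by blast
  ultimately have "P (a, b, Z)" unfolding P_def by simp
  then obtain t where "P t" and min: "\<forall>t'. P t' \<longrightarrow> card (snd (snd t)) \<le> card (snd (snd t'))"
    using ex_has_least_nat[of P _ "\<lambda>t. card (snd (snd t))"] by blast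
  then obtain x y A where t: "t = (x, y, A)" "x \<in> S" "y \<in> S" "x \<noteq> y" "splits (S - {x, y}) A"
    unfolding P_def by (cases t) auto
  have "card A \<le> card Z'" if "a' \<in> S" "b' \<in> S" "a' \<noteq> b'" "splits (S - {a', b'}) Z'" for a' b' Z'
    using min that t(1) unfolding P_def by fastforce
  then obtain u w where "u \<in> S" "w \<in> S" "E x u" "E x w" "u \<noteq> w" "\<not> E u w"
    "connected_in (S - {u, w})"
    by (rule two_cut_triple[OF assms(1,3,2) t(2-5)])
  then show ?thesis using that t(2) by blast
qed

lemma regular_card_le_mult_alpha:
  assumes "finite S" "\<forall>t\<in>S. deg S t = D" "3 \<le> D"
    and "v \<in> S" "\<not> in_complete_component S v"
    and "\<And>T. T \<subset> S \<Longrightarrow> card T \<le> D * \<alpha> T"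
  shows "card S \<le> D * \<alpha> S"
proof (cases "\<forall>z\<in>S. connected_in (S - {z})")
  case False
  then obtain x A where "x \<in> S" "splits (S - {x}) A" using not_connected_in_splits by metis
  then show ?thesis using cut_vertex_bound assms(1,6) by blast
next
  case True
  moreover have "\<forall>t\<in>S. 3 \<le> deg S t" using assms(2,3) by simp
  ultimately obtain x u w where xuw: "x \<in> S" "u \<in> S" "w \<in> S" "E x u" "E x w" "u \<noteq> w"
    "\<not> E u w" "connected_in (S - {u, w})"
    using two_connected_triple[OF assms(1) _ _ assms(4,5)] by blast
  have "2 \<le> D" using assms(3) by simp
  then obtain col where "\<forall>v\<in>S. col v < D" "proper_colouring S col"
    using brooks_colouring[OF assms(1,2) _ xuw] by blast
  then show ?thesis using card_le_mult_alpha assms(1) by blast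
qed

end

section \<open>The weighted bound\<close>

locale weighted_graph = sgraph E + weight_sequence D c
  for E :: "'a \<Rightarrow> 'a \<Rightarrow> bool" and D :: nat and c :: "nat \<Rightarrow> real" +
  assumes D_ge_3: "3 \<le> D"
begin

definition weight :: "'a set \<Rightarrow> 'a \<Rightarrow> real" where
  "weight S v =
    (if in_complete_component S v then 1 / real (Suc (deg S v)) else c (deg S v))"

abbreviation weight_bounded :: "'a set \<Rightarrow> bool" where
  "weight_bounded S \<equiv> (\<Sum>v\<in>S. weight S v) \<le> real (\<alpha> S)"

lemma weight_local:
  assumes "T \<subseteq> S" "\<forall>s\<in>T. \<forall>t\<in>S - T. \<not> E s t" "v \<in> T"
  shows "weight S v = weight T v"
  using in_complete_component_local[OF assms] unfolding weight_def degree_def by simp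

lemma weight_ge_inverse_D:
  assumes "finite S" "deg S v \<le> D" "\<not> (in_complete_component S v \<and> deg S v = D)"
  shows "1 / real D \<le> weight S v"
proof (cases "in_complete_component S v")
  case True
  then have "Suc (deg S v) \<le> D" using assms(2,3) by simp
  then show ?thesis using True D_ge_3 by (simp add: weight_def frac_le)
next
  case False
  then have "deg S v \<noteq> 0" using deg_zero_in_complete_component[OF assms(1)] by blast
  then have "1 \<le> deg S v" by simp
  then show ?thesis using False c_antimono[of "deg S v" D] c_D assms(2) by (simp add: weight_def)
qed

lemma sum_weight_complete_component:
  assumes "finite S" "in_complete_component S u"
  shows "(\<Sum>t\<in>closed_nbr S u. weight S t) = 1"
proof -
  have "weight S t = 1 / real (card (closed_nbr S u))" if "t \<in> closed_nbr S u" for t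
    using in_complete_component_closed_nbr(2)[OF assms(2) that]
      deg_in_complete_component[OF assms that] by (simp add: weight_def)
  moreover have "0 < card (closed_nbr S u)" using card_closed_nbr[OF assms(1)] by simp
  ultimately show ?thesis by simp
qed

lemma sum_weight_le_one:
  assumes "\<forall>t\<in>K. \<not> in_complete_component S t" "\<forall>t\<in>K. j \<le> deg S t \<and> deg S t \<le> D"
    and "card K = Suc j" "z \<in> K" "j < deg S z"
  shows "(\<Sum>t\<in>K. weight S t) \<le> 1"
proof -
  have "finite K" using assms(3) card_ge_0_finite by force
  have "(\<Sum>t\<in>K. weight S t) = (\<Sum>t\<in>K. c (deg S t))"
    using assms(1) by (simp add: weight_def)
  also have "\<dots> \<le> 1" using sum_c_le_one[OF \<open>finite K\<close> assms(3,4,5,2)] .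
  finally show ?thesis .
qed

lemma sum_weight_complete_component_le:
  assumes "finite S" "connected_in S" "\<forall>t\<in>S. \<not> in_complete_component S t"
    and "\<forall>t\<in>S. deg S t \<le> D" "T \<subset> S" "u \<in> T" "in_complete_component T u"
  shows "(\<Sum>t\<in>closed_nbr T u. weight S t) \<le> (\<Sum>t\<in>closed_nbr T u. weight T t)"
proof -
  define K where "K = closed_nbr T u"
  have fin: "finite T" using assms(1,5) finite_subset by auto
  have K: "K \<subseteq> T" "K \<noteq> {}"
    using closed_nbr_subset[OF assms(6)] unfolding K_def closed_nbr_def by auto
  define j where "j = deg T u"
  have deg_T: "deg T t = j" if "t \<in> K" for t
    using deg_eq_in_complete_component[OF fin assms(7)] that unfolding K_def j_def .
  have deg_ge: "j \<le> deg S t" if "t \<in> K" for t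
    using deg_mono[OF assms(1), of T t] assms(5) deg_T[OF that] by simp
  txt \<open>As \<open>S\<close> is connected and \<open>K \<noteq> S\<close>, some vertex of \<open>K\<close> has lost a neighbour.\<close>
  have "\<exists>z\<in>K. j < deg S z"
  proof (rule ccontr)
    assume "\<not> ?thesis"
    then have not_less: "\<not> j < deg S t" if "t \<in> K" for t using that by blast
    have nbr_eq: "nbr T t = nbr S t" if "t \<in> K" for t
    proof -
      have "deg T t = deg S t"
        using not_less[OF that] deg_T[OF that] deg_ge[OF that] by simp
      then show ?thesis using nbr_eq_if_deg_eq[OF assms(1)] assms(5) by blast
    qed
    have "\<forall>s\<in>K. \<forall>t\<in>S - K. \<not> E s t"
    proof (intro ballI notI)
      fix s t assume st: "s \<in> K" "t \<in> S - K" "E s t"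
      then have "t \<in> nbr T s" using nbr_eq[OF st(1)] by simp
      then have "t \<in> closed_nbr T s" by (simp add: closed_nbr_def)
      then show False
        using in_complete_component_closed_nbr(1)[OF assms(7)] st(1,2) unfolding K_def by simp
    qed
    then have "K = S" using connected_in_closed_subset_eq[OF assms(2)] K assms(5) by blast
    then show False using K(1) assms(5) by blast
  qed
  then obtain z where z: "z \<in> K" "j < deg S z" by blast
  have "card K = Suc j" using card_closed_nbr[OF fin] unfolding K_def j_def .
  then have "(\<Sum>t\<in>K. weight S t) \<le> 1"
    using sum_weight_le_one[OF _ _ _ z] assms(3,4) deg_ge K(1) assms(5) by blast
  then show ?thesis using sum_weight_complete_component[OF fin assms(7)] unfolding K_def by simp
qed

lemma sum_over_complete_components:
  fixes f :: "'a \<Rightarrow> real"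
  assumes "finite T"
  defines "Q \<equiv> {u \<in> T. in_complete_component T u}"
  shows "(\<Sum>t\<in>Q. f t) = (\<Sum>K\<in>closed_nbr T ` Q. \<Sum>t\<in>K. f t)"
proof -
  have "{x \<in> Q. closed_nbr T x = K} = K" if K: "K \<in> closed_nbr T ` Q" for K
  proof -
    obtain u where u: "u \<in> Q" "K = closed_nbr T u" using K by blast
    have "x \<in> Q \<and> closed_nbr T x = K" if "x \<in> K" for x
      using in_complete_component_closed_nbr[of T u x] closed_nbr_subset[of u T] u that
      unfolding Q_def by auto
    moreover have "x \<in> closed_nbr T x" for x by (simp add: closed_nbr_def)
    ultimately show ?thesis by blast
  qed
  then show ?thesis
    using sum.group[of Q "closed_nbr T ` Q" "closed_nbr T" f] assms(1) unfolding Q_def by simp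
qed

lemma sum_weight_le_subgraph:
  assumes "finite S" "connected_in S" "\<forall>t\<in>S. \<not> in_complete_component S t"
    and "\<forall>t\<in>S. deg S t \<le> D" "T \<subset> S"
  shows "(\<Sum>t\<in>T. weight S t) \<le> (\<Sum>t\<in>T. weight T t)"
proof -
  define Q where "Q = {u \<in> T. in_complete_component T u}"
  have fin: "finite T" "Q \<subseteq> T" using assms(1,5) finite_subset unfolding Q_def by auto
  have "(\<Sum>t\<in>Q. weight S t) = (\<Sum>K\<in>closed_nbr T ` Q. \<Sum>t\<in>K. weight S t)"
    using sum_over_complete_components[OF fin(1)] unfolding Q_def .
  also have "\<dots> \<le> (\<Sum>K\<in>closed_nbr T ` Q. \<Sum>t\<in>K. weight T t)"
    by (rule sum_mono) (use sum_weight_complete_component_le[OF assms] in \<open>auto simp: Q_def\<close>)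
  also have "\<dots> = (\<Sum>t\<in>Q. weight T t)"
    using sum_over_complete_components[OF fin(1)] unfolding Q_def by simp
  finally have Q_le: "(\<Sum>t\<in>Q. weight S t) \<le> (\<Sum>t\<in>Q. weight T t)" .
  have "weight S t \<le> weight T t" if "t \<in> T - Q" for t
  proof -
    have t: "t \<in> S" "\<not> in_complete_component T t" using that assms(5) unfolding Q_def by auto
    then have "deg T t \<noteq> 0" using deg_zero_in_complete_component[OF fin(1)] by blast
    moreover have "deg T t \<le> deg S t" using deg_mono[OF assms(1)] assms(5) by blast
    ultimately have "c (deg S t) \<le> c (deg T t)" using c_antimono assms(4) t(1) by simp
    then show ?thesis using t assms(3) by (simp add: weight_def)
  qed
  then have "(\<Sum>t\<in>T - Q. weight S t) \<le> (\<Sum>t\<in>T - Q. weight T t)" by (rule sum_mono)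
  then show ?thesis using Q_le sum.subset_diff[OF fin(2,1)] by (metis add_mono)
qed

lemma weight_bounded_if_splits:
  assumes "finite S" "\<And>T. T \<subset> S \<Longrightarrow> weight_bounded T" "splits S A"
  shows "weight_bounded S"
proof -
  define B where "B = S - A"
  have A: "A \<subseteq> S" "A \<subset> S" "B \<subset> S" "\<forall>s\<in>A. \<forall>t\<in>S - A. \<not> E s t"
    using assms(3) unfolding splits_def B_def by auto
  have B: "B \<subseteq> S" "\<forall>s\<in>B. \<forall>t\<in>S - B. \<not> E s t" "A \<inter> B = {}" "S = A \<union> B"
    using A(1,4) E_sym unfolding B_def by blast+
  have fin: "finite A" "finite B" using assms(1) A(1) B(1) finite_subset by auto
  have "(\<Sum>v\<in>S. weight S v) = (\<Sum>v\<in>A. weight S v) + (\<Sum>v\<in>B. weight S v)"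
    using sum.union_disjoint[OF fin B(3)] B(4) by simp
  also have "(\<Sum>v\<in>A. weight S v) = (\<Sum>v\<in>A. weight A v)"
    using weight_local[OF A(1,4)] by simp
  also have "(\<Sum>v\<in>B. weight S v) = (\<Sum>v\<in>B. weight B v)"
    using weight_local[OF B(1,2)] by simp
  also have "(\<Sum>v\<in>A. weight A v) + (\<Sum>v\<in>B. weight B v) \<le> real (\<alpha> A) + real (\<alpha> B)"
    using assms(2)[OF A(2)] assms(2)[OF A(3)] by simp
  also have "real (\<alpha> A) + real (\<alpha> B) \<le> real (\<alpha> S)"
    using alpha_Un[OF fin B(3)] A(4) B(4) unfolding B_def by simp
  finally show ?thesis by simp
qed

lemma weight_bounded_if_complete:
  assumes "finite S" "connected_in S" "v \<in> S" "in_complete_component S v"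
  shows "weight_bounded S"
proof -
  have "(\<Sum>t\<in>S. weight S t) = 1"
    using sum_weight_complete_component[OF assms(1,4)]
      connected_in_complete_component[OF assms(2-4)] by simp
  also have "1 \<le> real (\<alpha> S)" using alpha_pos[OF assms(1)] assms(3) by auto
  finally show ?thesis .
qed

lemma weight_bounded_if_irregular:
  assumes "finite S" "connected_in S" "\<forall>t\<in>S. \<not> in_complete_component S t"
    and "\<forall>t\<in>S. deg S t \<le> D" "\<And>T. T \<subset> S \<Longrightarrow> weight_bounded T"
    and "v \<in> S" "y \<in> nbr S v" "deg S v < deg S y" "\<forall>u\<in>nbr S v. deg S v \<le> deg S u"
  shows "weight_bounded S"
proof -
  define K where "K = closed_nbr S v"
  have K: "K \<subseteq> S" "v \<in> K" "y \<in> K" using closed_nbr_subset[OF assms(6)] assms(7)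
    unfolding K_def closed_nbr_def by auto
  have "\<forall>t\<in>K. deg S v \<le> deg S t \<and> deg S t \<le> D"
    using assms(4,9) K(1) unfolding K_def closed_nbr_def by auto
  then have "(\<Sum>t\<in>K. weight S t) \<le> 1"
    using sum_weight_le_one[OF _ _ _ K(3) assms(8)] assms(3) K(1) card_closed_nbr[OF assms(1)]
    unfolding K_def by blast
  moreover have "(\<Sum>t\<in>S - K. weight S t) \<le> (\<Sum>t\<in>S - K. weight (S - K) t)"
    using K(2) assms(6) by (intro sum_weight_le_subgraph[OF assms(1-4)]) blast
  moreover have "(\<Sum>t\<in>S - K. weight (S - K) t) \<le> real (\<alpha> (S - K))"
    using K(2) assms(5,6) by blast
  moreover have "(\<Sum>t\<in>S. weight S t) = (\<Sum>t\<in>K. weight S t) + (\<Sum>t\<in>S - K. weight S t)"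
    using sum.subset_diff[OF K(1) assms(1)] by (simp add: add.commute)
  moreover have "Suc (\<alpha> (S - K)) \<le> \<alpha> S"
    using alpha_Diff_closed_nbr[OF assms(1,6)] unfolding K_def .
  ultimately show ?thesis by simp
qed

lemma sum_weight_Diff_regular:
  assumes "finite S" "connected_in S" "\<forall>t\<in>S. \<not> in_complete_component S t"
    and "\<forall>t\<in>S. deg S t = d" "v \<in> S"
  shows "(\<Sum>t\<in>S - {v}. weight (S - {v}) t) = real d * c (d - 1) + real (card S - Suc d) * c d"
proof -
  define T where "T = S - {v}"
  have nbr_sub: "nbr S v \<subseteq> T" using not_in_nbr[of v S] nbr_subset[of S v] unfolding T_def by blast
  have weight_T: "weight T t = (if t \<in> nbr S v then c (d - 1) else c d)" if "t \<in> T" for t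
  proof -
    have "\<not> in_complete_component T t"
      using regular_Diff_no_complete_component[OF assms(1,2,4,3,5)] that unfolding T_def by blast
    moreover have "E t v \<longleftrightarrow> t \<in> nbr S v" using E_sym that unfolding T_def by auto
    ultimately show ?thesis
      using deg_Diff_singleton[OF assms(1,5)] assms(4) that unfolding T_def weight_def by auto
  qed
  have fin: "finite T" using assms(1) unfolding T_def by simp
  have card_nbr: "card (nbr S v) = d" using assms(4,5) by (simp add: degree_def)
  have "(\<Sum>t\<in>nbr S v. weight T t) = real d * c (d - 1)"
    using weight_T nbr_sub card_nbr by (simp add: subset_iff)
  moreover have "(\<Sum>t\<in>T - nbr S v. weight T t) = (\<Sum>t\<in>T - nbr S v. c d)"
    using weight_T by (intro sum.cong) auto
  moreover have "card (T - nbr S v) = card S - Suc d"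
    using card_Diff_subset[OF finite_nbr[OF assms(1)] nbr_sub] card_nbr
      card_Suc_Diff1[OF assms(1,5)] unfolding T_def by simp
  moreover have "(\<Sum>t\<in>T. weight T t) = (\<Sum>t\<in>nbr S v. weight T t) + (\<Sum>t\<in>T - nbr S v. weight T t)"
    using sum.subset_diff[OF nbr_sub fin, of "weight T"] by (simp add: add.commute)
  ultimately show ?thesis unfolding T_def by simp
qed

lemma weight_bounded_if_regular:
  assumes "finite S" "connected_in S" "\<forall>t\<in>S. \<not> in_complete_component S t"
    and "\<forall>t\<in>S. deg S t = d" "d < D" "v \<in> S" "\<And>T. T \<subset> S \<Longrightarrow> weight_bounded T"
  shows "weight_bounded S"
proof -
  have "d \<noteq> 0" using deg_zero_in_complete_component[OF assms(1), of v] assms(3,4,6) by auto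
  moreover have "d \<noteq> 1"
  proof
    assume "d = 1"
    then have "\<forall>z\<in>nbr S v. deg S z = 1" using assms(4) by simp
    then show False
      using deg_one_in_complete_component[OF assms(1,6)] \<open>d = 1\<close> assms(3,4,6) by simp
  qed
  ultimately have "2 \<le> d" by simp
  have "d < card S"
    using card_closed_nbr[OF assms(1), of v] card_mono[OF assms(1) closed_nbr_subset[OF assms(6)]]
      assms(4,6) by simp
  have "(\<Sum>t\<in>S. weight S t) = real (card S) * c d" using assms(3,4) by (simp add: weight_def)
  also have "\<dots> = real (Suc d) * c d + real (card S - Suc d) * c d"
    using \<open>d < card S\<close> by (simp add: algebra_simps of_nat_diff)
  also have "\<dots> \<le> real d * c (d - 1) + real (card S - Suc d) * c d"
    using Suc_mult_c_le_mult_c_pred[OF \<open>2 \<le> d\<close> assms(5)] by simp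
  also have "\<dots> = (\<Sum>t\<in>S - {v}. weight (S - {v}) t)"
    using sum_weight_Diff_regular[OF assms(1-4,6)] by simp
  also have "\<dots> \<le> real (\<alpha> (S - {v}))" using assms(6,7) by blast
  also have "\<dots> \<le> real (\<alpha> S)" using alpha_mono[OF assms(1)] by simp
  finally show ?thesis .
qed

lemma card_le_mult_alpha_if_weight_bounded:
  assumes "finite T" "\<forall>t\<in>T. deg T t \<le> D" "\<forall>t\<in>T. \<not> (in_complete_component T t \<and> deg T t = D)"
    and "weight_bounded T"
  shows "card T \<le> D * \<alpha> T"
proof -
  have "real (card T) * (1 / real D) \<le> (\<Sum>t\<in>T. weight T t)"
    using sum_mono[of T "\<lambda>_. 1 / real D" "weight T"] weight_ge_inverse_D[OF assms(1)] assms(2,3)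
    by simp
  also have "\<dots> \<le> real (\<alpha> T)" by (rule assms(4))
  finally have "real (card T) \<le> real D * real (\<alpha> T)" using D_ge_3 by (simp add: field_simps)
  then show ?thesis by (simp flip: of_nat_mult)
qed

lemma weight_bounded_if_max_regular:
  assumes "finite S" "\<forall>t\<in>S. \<not> in_complete_component S t" "\<forall>t\<in>S. deg S t = D" "v \<in> S"
    and "\<And>T. T \<subset> S \<Longrightarrow> weight_bounded T"
  shows "weight_bounded S"
proof -
  have "card T \<le> D * \<alpha> T" if "T \<subset> S" for T
  proof (rule card_le_mult_alpha_if_weight_bounded)
    show "finite T" using assms(1) that finite_subset by auto
    show "\<forall>t\<in>T. deg T t \<le> D"
      using deg_mono[OF assms(1)] assms(3) that by (metis psubset_imp_subset subsetD)
    show "\<forall>t\<in>T. \<not> (in_complete_component T t \<and> deg T t = D)"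
      using in_complete_component_saturated[OF assms(1)] assms(2,3) that
      by (metis order_refl psubset_imp_subset subsetD)
    show "weight_bounded T" using assms(5) that .
  qed
  then have "card S \<le> D * \<alpha> S"
    using regular_card_le_mult_alpha[OF assms(1,3) D_ge_3 assms(4)] assms(2,4) by blast
  then have "real (card S) * (1 / real D) \<le> real (\<alpha> S)"
    using D_ge_3 by (simp add: field_simps flip: of_nat_mult)
  moreover have "(\<Sum>t\<in>S. weight S t) = real (card S) * (1 / real D)"
    using assms(2,3) c_D by (simp add: weight_def)
  ultimately show ?thesis by simp
qed

lemma weight_bounded_if_connected:
  assumes "finite S" "connected_in S" "\<forall>t\<in>S. \<not> in_complete_component S t"
    and "\<forall>t\<in>S. deg S t \<le> D" "\<And>T. T \<subset> S \<Longrightarrow> weight_bounded T" "v \<in> S"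
  shows "weight_bounded S"
proof (cases "\<exists>a\<in>S. \<exists>b\<in>nbr S a. deg S a < deg S b")
  case True
  then obtain a b where "a \<in> S" "b \<in> nbr S a" "deg S a < deg S b" by blast
  then obtain v y where "v \<in> S" "y \<in> nbr S v" "deg S v < deg S y" "\<forall>u\<in>nbr S v. deg S v \<le> deg S u"
    by (rule min_irregular_vertex)
  then show ?thesis using weight_bounded_if_irregular[OF assms(1-5)] by blast
next
  case False
  then have regular: "\<forall>t\<in>S. deg S t = deg S v"
    using regular_if_no_irregular_edge[OF assms(2,6)] by blast
  show ?thesis
  proof (cases "deg S v < D")
    case True
    then show ?thesis using weight_bounded_if_regular[OF assms(1-3) regular _ assms(6,5)] by blast
  next
    case False
    then have "\<forall>t\<in>S. deg S t = D" using regular assms(4,6) by fastforce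
    then show ?thesis using weight_bounded_if_max_regular[OF assms(1,3) _ assms(6,5)] by blast
  qed
qed

theorem weight_bounded_if_max_degree:
  assumes "finite S" "\<forall>v\<in>S. deg S v \<le> D"
  shows "weight_bounded S"
  using assms
proof (induction S rule: finite_psubset_induct)
  case (psubset S)
  have IH: "weight_bounded T" if "T \<subset> S" for T
  proof -
    have "deg T v \<le> D" if "v \<in> T" for v
    proof -
      have "v \<in> S" "T \<subseteq> S" using \<open>T \<subset> S\<close> that by auto
      then show ?thesis using deg_mono[OF psubset.hyps(1), of T v] psubset.prems by fastforce
    qed
    then show ?thesis using psubset.IH that by blast
  qed
  consider "S = {}" | "\<not> connected_in S"
    | v where "connected_in S" "v \<in> S" "in_complete_component S v"
    | v where "connected_in S" "v \<in> S" "\<forall>t\<in>S. \<not> in_complete_component S t"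
    by blast
  then show ?case
  proof cases
    case 2
    then obtain A where "splits S A" by (rule not_connected_in_splits)
    then show ?thesis using weight_bounded_if_splits[OF psubset.hyps(1) IH] by blast
  next
    case (3 v)
    then show ?thesis using weight_bounded_if_complete[OF psubset.hyps(1)] by blast
  next
    case (4 v)
    then show ?thesis
      using weight_bounded_if_connected[OF psubset.hyps(1) _ _ psubset.prems IH] by blast
  qed simp
qed

end

lemma deg_le_max_degree: "finite V \<Longrightarrow> v \<in> V \<Longrightarrow> degree V E v \<le> max_degree V E"
  unfolding max_degree_def by (intro Max_ge) auto

lemma sum_deg_class:
  fixes f :: "nat \<Rightarrow> real"
  assumes "finite V" "degree V E ` V \<subseteq> {1..\<Delta>}"
  shows "(\<Sum>i = 1..\<Delta>. f i * real (card (deg_class V E i))) = (\<Sum>v\<in>V. f (degree V E v))"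
proof -
  have "(\<Sum>i = 1..\<Delta>. f i * real (card (deg_class V E i)))
      = (\<Sum>i = 1..\<Delta>. \<Sum>v\<in>{v \<in> V. degree V E v = i}. f (degree V E v))"
    unfolding deg_class_def by (intro sum.cong) auto
  also have "\<dots> = (\<Sum>v\<in>V. f (degree V E v))"
    using sum.group[OF assms(1) _ assms(2), of "\<lambda>v. f (degree V E v)"] by simp
  finally show ?thesis .
qed

theorem theorem2:
  fixes \<Delta> :: nat and V :: "'a set" and E :: "'a \<Rightarrow> 'a \<Rightarrow> bool" and c :: "nat \<Rightarrow> real"
  assumes "\<Delta> \<ge> 3"
    and "in_G_Delta \<Delta> V E"
    and "c \<Delta> = 1 / real \<Delta>"
    and "\<And>i. 1 \<le> i \<Longrightarrow> i \<le> \<Delta> - 1 \<Longrightarrow> real i * c i + c (i + 1) = 1"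
  shows "real (independence_number V E) \<ge> (\<Sum>i = 1..\<Delta>. c i * real (card (deg_class V E i)))"
proof -
  have G: "simple_graph V E" "max_degree V E = \<Delta>" using assms(2) unfolding in_G_Delta_def by auto
  then have fin: "finite V" unfolding simple_graph_def by blast
  interpret weighted_graph E \<Delta> c
    using G(1) assms(1,3,4) by unfold_locales (auto simp: simple_graph_def)
  have no_cc: "\<forall>v\<in>V. \<not> in_complete_component V v"
    using in_G_Delta_no_complete_component[OF assms(2)] by blast
  have deg: "\<forall>v\<in>V. deg V v \<le> \<Delta>" using deg_le_max_degree[OF fin, of _ E] G(2) by simp
  have "deg V v \<in> {1..\<Delta>}" if "v \<in> V" for v
    using deg that deg_zero_in_complete_component[OF fin, of v] no_cc by (cases "deg V v") auto
  then have "(\<Sum>i = 1..\<Delta>. c i * real (card (deg_class V E i))) = (\<Sum>v\<in>V. weight V v)"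
    using sum_deg_class[OF fin, where f = c] no_cc by (simp add: image_subset_iff weight_def)
  also have "\<dots> \<le> real (independence_number V E)" using weight_bounded_if_max_degree[OF fin deg] .
  finally show ?thesis .
qed

end
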